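(* Let $n\ge 2$ and $\sigma,\tau\in S_n$ with $\sigma^{\sf CT}\neq\tau^{\sf CT}$. Let $\omega$ and $\pi$ be the cycles of the disjoint cycle decomposition of $\sigma^{-1}\tau$ containing $n-1$ and $\sigma(n-1)$, respectively (a cycle being $(0)$, the identity, if the symbol is fixed). Suppose $\sigma^{-1}\tau=\rho\,\omega\,\pi$ if $\omega\neq\pi$ and $\sigma^{-1}\tau=\rho\,\omega$ if $\omega=\pi$, where $\rho\in S_n$ is disjoint from $\omega$ and $\pi$. Then $(\sigma^{\sf CT})^{-1}\tau^{\sf CT}=\rho\,\chi$ for some $\chi\in S_{n-1}$ disjoint from $\rho$, and: (1) if ${\rm hd}(\sigma^{\sf CT},\tau^{\sf CT})={\rm hd}(\sigma,\tau)$, then $\omega=(0)$ or $\pi=(0)$, and $\chi$ is a cycle with $|\chi|=|\omega\pi|$; (2) if ${\rm hd}(\sigma^{\sf CT},\tau^{\sf CT})={\rm hd}(\sigma,\tau)-1$, then (a) if $\omega=\pi$, either $\chi$ is a cycle with $|\chi|=|\omega|-1$, or $\chi$ is a product of two disjoint cycles $\omega',\pi'$ with $|\omega'|+|\pi'|=|\omega|-1$; (b) if $\omega\neq\pi$, $\chi$ is a cycle with $|\chi|=|\omega|+|\pi|-1$; (3) if ${\rm hd}(\sigma^{\sf CT},\tau^{\sf CT})={\rm hd}(\sigma,\tau)-2$, then $\omega=\pi$ and $\chi$ is a cycle with $|\chi|=|\omega|-2$; (4) if ${\rm hd}(\sigma^{\sf CT},\tau^{\sf CT})={\rm hd}(\sigma,\tau)-3$,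 then $\omega=\pi$, $|\omega|=3$ and $\chi=(0)$.
   Context: $S_n$ is the symmetric group on $\{0,1,\ldots,n-1\}$, with composition from left to right: $\tau\sigma(x):=\sigma(\tau(x))$, so $\sigma^{-1}\tau(x)=\tau(\sigma^{-1}(x))$. ${\rm hd}(\sigma,\tau)=|\{x:\sigma(x)\neq\tau(x)\}|$. The contraction of $\sigma\in S_n$ is $\sigma^{\sf CT}\in S_{n-1}$ (on $\{0,\ldots,n-2\}$) defined by $\sigma^{\sf CT}(x)=\sigma(n-1)$ if $x=\sigma^{-1}(n-1)$ and $\sigma^{\sf CT}(x)=\sigma(x)$ otherwise (i.e. delete $n-1$ from the cycle notation of $\sigma$). $|\rho|$ denotes the length of a cycle $\rho$; the identity permutation, written $(0)$, is regarded as a cycle of length $0$, and a symbol fixed by a permutation is said to belong to a cycle of length zero in its decomposition. When one of $\omega,\pi$ is $(0)$, $\omega\pi$ is a cycle and $|\omega\pi|$ is its length. *)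

theory Defs
  imports "HOL-Combinatorics.Permutations"
begin

text \<open>Permutations of {0,...,n-1} are functions nat => nat with f permutes {..<n}.
Products are read left to right: the product (p q) is the function q o p.\<close>

definition supp :: "(nat \<Rightarrow> nat) \<Rightarrow> nat set" where
  "supp f = {x. f x \<noteq> x}"

definition hd :: "nat \<Rightarrow> (nat \<Rightarrow> nat) \<Rightarrow> (nat \<Rightarrow> nat) \<Rightarrow> nat" where
  "hd n s t = card {x. x < n \<and> s x \<noteq> t x}"

definition ct :: "nat \<Rightarrow> (nat \<Rightarrow> nat) \<Rightarrow> (nat \<Rightarrow> nat)" where
  "ct n s x = (if n - 1 \<le> x then x else if s x = n - 1 then s (n - 1) else s x)"

definition cycle_of :: "(nat \<Rightarrow> nat) \<Rightarrow> nat \<Rightarrow> (nat \<Rightarrow> nat)" where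
  "cycle_of g x = (\<lambda>y. if (\<exists>k. (g ^^ k) x = y) then g y else y)"

definition is_cycle :: "(nat \<Rightarrow> nat) \<Rightarrow> bool" where
  "is_cycle f \<longleftrightarrow> finite (supp f) \<and> (\<exists>a. \<forall>x\<in>supp f. \<exists>k. (f ^^ k) a = x)"

definition cyc_len :: "(nat \<Rightarrow> nat) \<Rightarrow> nat" where
  "cyc_len f = card (supp f)"

end

(*
  Write a = n - 1, b = sigma a and g = tau o inv sigma (the paper's sigma^-1 tau).
  Contracting a permutation s deletes n - 1 from its cycle notation, i.e. it multiplies
  s by the transposition (a, s a); hence the contracted quotient is obtained from
  g o (a b) by deleting a from its cycle. Multiplying by the transposition (a b) merges
  the cycles omega and pi of a and b when they differ and splits their common cycle at a
  and b otherwise; deleting a shortens the resulting cycle through a by one point. The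
  rest rho of g fixes a, b and g b, so it survives unchanged. As hd(sigma, tau) is the
  number of points moved by g, comparing cycle lengths before and after yields the four
  cases.
*)

theory Submission
  imports Defs "HOL-Combinatorics.Cycles"
begin

lemma supp_id [simp]: "supp id = {}"
  by (simp add: supp_def)

lemma supp_eq_empty_iff: "supp f = {} \<longleftrightarrow> f = id"
  by (auto simp: supp_def fun_eq_iff)

lemma supp_comp_subset: "supp (f \<circ> h) \<subseteq> supp f \<union> supp h"
  by (auto simp: supp_def)

lemma supp_transpose_subset: "supp (transpose a b) \<subseteq> {a, b}"
  by (auto simp: supp_def transpose_def)

lemma supp_comp_disjoint:
  assumes "inj h" "supp f \<inter> supp h = {}"
  shows "supp (f \<circ> h) = supp f \<union> supp h"
proof -
  have "h x \<notin> supp f" if "x \<in> supp h" for x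
    using that assms injD[OF assms(1), of "h x" x] by (auto simp: supp_def)
  then show ?thesis using assms(2) by (auto simp: supp_def)
qed

lemma cyc_len_comp_disjoint:
  assumes "inj h" "supp f \<inter> supp h = {}" "finite (supp (f \<circ> h))"
  shows "cyc_len (f \<circ> h) = cyc_len f + cyc_len h"
  using assms supp_comp_disjoint[OF assms(1,2)] by (simp add: cyc_len_def card_Un_disjoint)

lemma finite_supp_permutes:
  assumes "p permutes S" "finite S"
  shows "finite (supp p)"
proof (rule finite_subset[OF _ assms(2)])
  show "supp p \<subseteq> S" using permutes_not_in[OF assms(1)] by (auto simp: supp_def)
qed

lemma permutes_comp_cancel_right:
  assumes "q \<circ> p permutes S" "p permutes S"
  shows "q permutes S"
proof -
  have "q = (q \<circ> p) \<circ> inv p" using permutes_inv_o(1)[OF assms(2)] by (simp add: comp_assoc)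
  then show ?thesis using permutes_compose[OF permutes_inv[OF assms(2)] assms(1)] by simp
qed

lemma cycle_of_list_eq_id: "length L < 2 \<Longrightarrow> cycle_of_list L = id"
  by (cases L rule: cycle_of_list.cases) auto

lemma inj_cycle_of_list: "inj (cycle_of_list L)"
  by (simp add: bij_is_inj permutation_bijective permutation_of_cycle)

lemma supp_cycle_of_list_subset: "supp (cycle_of_list L) \<subseteq> set L"
  using id_outside_supp[of _ L] by (auto simp: supp_def)

lemma supp_cycle_of_list:
  assumes "distinct L"
  shows "supp (cycle_of_list L) = (if 2 \<le> length L then set L else {})"
proof (cases "2 \<le> length L")
  case True
  have "cycle_of_list L x \<noteq> x" if "x \<in> set L" for x
  proof -
    obtain i where i: "i < length L" "x = L ! i" using \<open>x \<in> set L\<close> by (auto simp: in_set_conv_nth)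
    have "map (cycle_of_list L) L = rotate 1 L" using cyclic_rotation[OF assms, of 1] by simp
    then have "cycle_of_list L x = L ! (Suc i mod length L)"
      using i nth_rotate[of i L 1] by (metis nth_map plus_1_eq_Suc)
    moreover have "Suc i mod length L \<noteq> i"
      using True i(1) by (cases "Suc i = length L") auto
    moreover have "Suc i mod length L < length L" using i(1) by (intro mod_less_divisor) linarith
    ultimately show ?thesis using assms i by (simp add: nth_eq_iff_index_eq)
  qed
  then show ?thesis using True supp_cycle_of_list_subset[of L] by (auto simp: supp_def)
next
  case False
  then show ?thesis by (simp add: cycle_of_list_eq_id)
qed

lemma cyc_len_cycle_of_list:
  "distinct L \<Longrightarrow> cyc_len (cycle_of_list L) = (if 2 \<le> length L then length L else 0)"
  by (simp add: cyc_len_def supp_cycle_of_list distinct_card)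

lemma is_cycle_cycle_of_list:
  assumes "distinct L"
  shows "is_cycle (cycle_of_list L)"
proof (cases L)
  case (Cons y ys)
  have reach: "(cycle_of_list L ^^ j) (L ! 0) = L ! j" if "j < length L" for j
    using cyclic_rotation[OF assms, of j] nth_rotate[of 0 L j] that Cons
    by (metis nth_map mod_less add_0_right length_greater_0_conv list.distinct(1))
  have "\<forall>x\<in>set L. \<exists>k. (cycle_of_list L ^^ k) (L ! 0) = x"
    using reach by (metis in_set_conv_nth)
  then show ?thesis by (auto simp: is_cycle_def supp_cycle_of_list[OF assms])
qed (simp add: is_cycle_def)

lemma cycle_of_list_append:
  "cycle_of_list (xs @ c # ys) = cycle_of_list (xs @ [c]) \<circ> cycle_of_list (c # ys)"
proof (induction xs)
  case (Cons x xs)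
  then show ?case by (cases xs) (simp_all add: o_assoc)
qed simp

lemma transpose_conj_cycle_of_list:
  "distinct L \<Longrightarrow>
    transpose a b \<circ> cycle_of_list L \<circ> transpose a b = cycle_of_list (map (transpose a b) L)"
  using conjugation_of_cycle[of L "transpose a b"] by simp

lemma cycle_of_list_comp_transpose_split:
  assumes "distinct (a # us @ b # vs)"
  shows "cycle_of_list (a # us @ b # vs) \<circ> transpose a b =
    cycle_of_list (a # vs) \<circ> cycle_of_list (b # us)"
proof -
  let ?t = "transpose a b"
  have fixed: "map ?t us = us" "map ?t vs = vs"
    using assms by (auto intro!: map_idI transpose_apply_other)
  have "?t \<circ> cycle_of_list (a # us) = cycle_of_list (a # us @ [b])"
    using assms cycle_of_list_rotate_independent[of "b # a # us" 1]
    by (auto simp: transpose_commute)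
  then have head: "cycle_of_list (a # us @ [b]) \<circ> ?t = cycle_of_list (b # us)"
    using assms transpose_conj_cycle_of_list[of "a # us" a b] fixed by (simp add: o_assoc)
  have conj: "?t \<circ> cycle_of_list (b # vs) \<circ> ?t = cycle_of_list (a # vs)"
    using assms transpose_conj_cycle_of_list[of "b # vs" a b] fixed by simp
  have "?t \<circ> cycle_of_list (a # vs) = (?t \<circ> ?t) \<circ> cycle_of_list (b # vs) \<circ> ?t"
    unfolding conj [symmetric] by (simp only: comp_assoc)
  then have tail: "cycle_of_list (b # vs) \<circ> ?t = ?t \<circ> cycle_of_list (a # vs)"
    by simp
  have "cycle_of_list (a # us @ b # vs) = cycle_of_list (a # us @ [b]) \<circ> cycle_of_list (b # vs)"
    using cycle_of_list_append[of "a # us" b vs] by simp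
  then have "cycle_of_list (a # us @ b # vs) \<circ> ?t =
      cycle_of_list (a # us @ [b]) \<circ> (cycle_of_list (b # vs) \<circ> ?t)"
    by (simp only: comp_assoc)
  also have "\<dots> = (cycle_of_list (a # us @ [b]) \<circ> ?t) \<circ> cycle_of_list (a # vs)"
    by (simp only: tail comp_assoc)
  also have "\<dots> = cycle_of_list (b # us) \<circ> cycle_of_list (a # vs)"
    by (simp only: head)
  also have "\<dots> = cycle_of_list (a # vs) \<circ> cycle_of_list (b # us)"
    using assms by (intro cycles_commute) auto
  finally show ?thesis .
qed

lemma cycle_of_list_comp_transpose_merge:
  assumes "distinct (a # zs @ b # xs)"
  shows "cycle_of_list (b # zs) \<circ> cycle_of_list (a # xs) \<circ> transpose a b =
    cycle_of_list (a # zs @ b # xs)"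
proof -
  have "cycle_of_list (b # zs) \<circ> cycle_of_list (a # xs) =
      cycle_of_list (a # xs) \<circ> cycle_of_list (b # zs)"
    using assms by (intro cycles_commute) auto
  also have "\<dots> = cycle_of_list (a # zs @ b # xs) \<circ> transpose a b"
    using cycle_of_list_comp_transpose_split[OF assms] by simp
  finally have "cycle_of_list (b # zs) \<circ> cycle_of_list (a # xs) \<circ> transpose a b =
      cycle_of_list (a # zs @ b # xs) \<circ> (transpose a b \<circ> transpose a b)"
    by (simp only: comp_assoc)
  then show ?thesis by simp
qed

lemma support_Cons:
  assumes "permutation g"
  obtains xs where "support g x = x # xs"
proof -
  have "0 < least_power g x" by (rule least_power_of_permutation(2)[OF assms])
  then show thesis using that by (simp add: upt_conv_Cons)
qed

lemma cycle_of_support: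
  assumes "permutation g"
  shows "cycle_of g x = (\<lambda>y. if y \<in> set (support g x) then g y else y)"
proof -
  have "(\<exists>k. (g ^^ k) x = y) \<longleftrightarrow> y \<in> range (\<lambda>i. (g ^^ i) x)" for y by auto
  then show ?thesis unfolding cycle_of_def support_set[OF assms] by (simp only:)
qed

lemma cycle_of_eq_cycle_of_list:
  assumes "permutation g"
  shows "cycle_of g x = cycle_of_list (support g x)"
proof
  fix y
  show "cycle_of g x y = cycle_of_list (support g x) y"
  proof (cases "y \<in> set (support g x)")
    case True
    then show ?thesis by (simp add: cycle_of_support[OF assms] cycle_restrict[OF assms True])
  next
    case False
    then show ?thesis by (simp add: cycle_of_support[OF assms] id_outside_supp[OF False])
  qed
qed

lemma cycle_of_eq_if_in_support:
  assumes "permutation g" "b \<in> set (support g a)"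
  shows "cycle_of g b = cycle_of g a"
proof -
  obtain zs where "support g b = b # zs" using support_Cons[OF assms(1)] .
  then have "set (support g b) \<inter> set (support g a) \<noteq> {}" using assms(2) by auto
  then have "set (support g b) = set (support g a)"
    using disjoint_support[OF assms(1)] by (meson UNIV_I disjoint_def image_iff)
  then show ?thesis by (simp add: cycle_of_support[OF assms(1)])
qed

section \<open>Removing a point from its cycle\<close>

(* Deletes a from the cycle notation of h: the preimage of a is sent to h a, and a is fixed. *)
definition remove_point :: "'a \<Rightarrow> ('a \<Rightarrow> 'a) \<Rightarrow> 'a \<Rightarrow> 'a" where
  "remove_point a h = transpose a (h a) \<circ> h"

lemma remove_point_apply_self [simp]: "remove_point a h a = a"
  by (simp add: remove_point_def)

lemma remove_point_comp_fixed: "k a = a \<Longrightarrow> remove_point a (f \<circ> k) = remove_point a f \<circ> k"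
  by (simp add: remove_point_def o_assoc)

lemma supp_remove_point_subset: "supp (remove_point a h) \<subseteq> supp h \<union> {a, h a}"
  by (auto simp: supp_def remove_point_def transpose_def split: if_splits)

lemma remove_point_cycle_of_list:
  assumes "a \<notin> set L"
  shows "remove_point a (cycle_of_list (a # L)) = cycle_of_list L"
proof (cases L)
  case (Cons x L')
  then have "cycle_of_list (x # L') a = a" using assms by (simp add: id_outside_supp)
  then show ?thesis using Cons by (simp add: remove_point_def o_assoc)
qed (simp add: remove_point_def)

lemma remove_point_permutes:
  assumes "h permutes S" "a \<in> S"
  shows "remove_point a h permutes S - {a}"
proof (rule permutes_superset)
  show "remove_point a h permutes S"
    unfolding remove_point_def using assms permutes_in_image[OF assms(1)]
    by (intro permutes_compose permutes_swap_id) auto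
qed simp

lemma remove_point_comp_inv:
  assumes "bij \<sigma>"
  shows "remove_point a \<tau> \<circ> inv (remove_point a \<sigma>) =
    remove_point a (\<tau> \<circ> inv \<sigma> \<circ> transpose a (\<sigma> a))"
  using assms by (simp add: remove_point_def o_inv_distrib bij_is_inj o_assoc)

lemma ct_eq_remove_point:
  assumes "\<sigma> permutes {..<n}"
  shows "ct n \<sigma> = remove_point (n - 1) \<sigma>"
proof
  fix x
  have "\<sigma> x = \<sigma> y \<longleftrightarrow> x = y" for y using permutes_inj[OF assms] by (simp add: inj_eq)
  moreover have "\<sigma> x = x" if "n \<le> x" using that permutes_not_in[OF assms] by simp
  moreover have "\<sigma> (n - 1) < n" if "0 < n" using that permutes_in_image[OF assms] by simp
  moreover have "\<sigma> 0 = 0" if "n = 0" using that permutes_not_in[OF assms] by simp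
  ultimately show "ct n \<sigma> x = remove_point (n - 1) \<sigma> x"
    by (auto simp: ct_def remove_point_def transpose_def)
qed

lemma ct_permutes:
  assumes "\<sigma> permutes {..<n}" "1 \<le> n"
  shows "ct n \<sigma> permutes {..<n - 1}"
proof -
  have "{..<n} - {n - 1} = {..<n - 1}" using assms(2) by auto
  then show ?thesis
    using remove_point_permutes[OF assms(1), of "n - 1"] assms by (simp add: ct_eq_remove_point)
qed

lemma hd_eq_cyc_len:
  assumes \<sigma>: "\<sigma> permutes {..<n}" and \<tau>: "\<tau> permutes {..<n}"
  shows "hd n \<sigma> \<tau> = cyc_len (\<tau> \<circ> inv \<sigma>)"
proof -
  have "{x. x < n \<and> \<sigma> x \<noteq> \<tau> x} = {x. \<sigma> x \<noteq> \<tau> x}"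
    using permutes_not_in[OF \<sigma>] permutes_not_in[OF \<tau>] by fastforce
  moreover have "supp (\<tau> \<circ> inv \<sigma>) = \<sigma> ` {x. \<sigma> x \<noteq> \<tau> x}"
    using permutes_inverses[OF \<sigma>] by (auto simp: supp_def image_def) metis
  ultimately show ?thesis
    using card_image[OF inj_on_subset[OF permutes_inj[OF \<sigma>]]] by (simp add: hd_def cyc_len_def)
qed

section \<open>Cycle type after a transposition and a removal\<close>

(* The conclusions (1)-(4) of the theorem, with d and d' the Hamming distances before
   and after the contraction. *)
definition contraction_pattern ::
  "nat \<Rightarrow> nat \<Rightarrow> (nat \<Rightarrow> nat) \<Rightarrow> (nat \<Rightarrow> nat) \<Rightarrow> (nat \<Rightarrow> nat) \<Rightarrow> bool" where
  "contraction_pattern d d' \<omega> \<pi> \<chi> \<longleftrightarrow>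
     (d' = d \<longrightarrow> (\<omega> = id \<or> \<pi> = id) \<and> is_cycle \<chi> \<and> cyc_len \<chi> = cyc_len (\<pi> \<circ> \<omega>)) \<and>
     (d' + 1 = d \<longrightarrow>
        (\<omega> = \<pi> \<longrightarrow>
           (is_cycle \<chi> \<and> cyc_len \<chi> + 1 = cyc_len \<omega>) \<or>
           (\<exists>\<omega>' \<pi>'. is_cycle \<omega>' \<and> is_cycle \<pi>' \<and> supp \<omega>' \<inter> supp \<pi>' = {} \<and>
              \<chi> = \<pi>' \<circ> \<omega>' \<and> cyc_len \<omega>' + cyc_len \<pi>' + 1 = cyc_len \<omega>)) \<and>
        (\<omega> \<noteq> \<pi> \<longrightarrow> is_cycle \<chi> \<and> cyc_len \<chi> + 1 = cyc_len \<omega> + cyc_len \<pi>)) \<and>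
     (d' + 2 = d \<longrightarrow> \<omega> = \<pi> \<and> is_cycle \<chi> \<and> cyc_len \<chi> + 2 = cyc_len \<omega>) \<and>
     (d' + 3 = d \<longrightarrow> \<omega> = \<pi> \<and> cyc_len \<omega> = 3 \<and> \<chi> = id)"

lemma contraction_pattern_add:
  "contraction_pattern d d' \<omega> \<pi> \<chi> \<Longrightarrow> contraction_pattern (d + r) (d' + r) \<omega> \<pi> \<chi>"
  by (auto simp: contraction_pattern_def)

lemma contraction_pattern_remove_point:
  assumes "distinct (a # xs)"
  defines "\<omega> \<equiv> cycle_of_list (a # xs)"
  shows "contraction_pattern (cyc_len \<omega>) (cyc_len (remove_point a \<omega>)) \<omega> \<omega> (remove_point a \<omega>)"
proof (cases xs)
  case Nil
  then show ?thesis by (simp add: \<omega>_def contraction_pattern_def remove_point_def is_cycle_def)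
next
  case Cons
  have "remove_point a \<omega> = cycle_of_list xs"
    using assms(1) by (simp add: \<omega>_def remove_point_cycle_of_list)
  moreover have "cyc_len \<omega> = Suc (length xs)"
    unfolding \<omega>_def cyc_len_cycle_of_list[OF assms(1)] using Cons by simp
  ultimately show ?thesis using assms(1)
    by (auto simp: contraction_pattern_def cyc_len_cycle_of_list is_cycle_cycle_of_list)
qed

lemma contraction_pattern_split:
  assumes "distinct (a # us @ b # vs)"
  defines "\<omega> \<equiv> cycle_of_list (a # us @ b # vs)"
  shows "contraction_pattern (cyc_len \<omega>) (cyc_len (remove_point a (\<omega> \<circ> transpose a b)))
           \<omega> \<omega> (remove_point a (\<omega> \<circ> transpose a b))"
proof -
  let ?\<omega>' = "cycle_of_list (b # us)" and ?\<pi>' = "cycle_of_list vs"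
  have "remove_point a (\<omega> \<circ> transpose a b) = remove_point a (cycle_of_list (a # vs) \<circ> ?\<omega>')"
    using cycle_of_list_comp_transpose_split[OF assms(1)] by (simp add: \<omega>_def)
  also have "\<dots> = ?\<pi>' \<circ> ?\<omega>'"
    using assms(1) by (simp add: remove_point_comp_fixed id_outside_supp remove_point_cycle_of_list)
  finally have \<chi>: "remove_point a (\<omega> \<circ> transpose a b) = ?\<pi>' \<circ> ?\<omega>'" .
  have disj: "supp ?\<omega>' \<inter> supp ?\<pi>' = {}"
    using assms(1) by (auto simp: supp_cycle_of_list)
  have fin: "finite (supp (?\<pi>' \<circ> ?\<omega>'))"
    using supp_comp_subset[of ?\<pi>' ?\<omega>'] supp_cycle_of_list_subset[of vs]
      supp_cycle_of_list_subset[of "b # us"] by (auto intro: finite_subset)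
  have len_sum: "cyc_len (?\<pi>' \<circ> ?\<omega>') = cyc_len ?\<pi>' + cyc_len ?\<omega>'"
    using disj fin by (intro cyc_len_comp_disjoint[OF inj_cycle_of_list]) auto
  also have "\<dots> = (if 2 \<le> length vs then length vs else 0) +
      (if us = [] then 0 else Suc (length us))"
    using assms(1) by (cases us) (simp_all add: cyc_len_cycle_of_list del: cycle_of_list.simps)
  finally have len: "cyc_len (?\<pi>' \<circ> ?\<omega>') = (if 2 \<le> length vs then length vs else 0) +
                   (if us = [] then 0 else Suc (length us))" .
  have "cyc_len \<omega> = length us + length vs + 2"
    unfolding \<omega>_def cyc_len_cycle_of_list[OF assms(1)] by simp
  moreover have "is_cycle (?\<pi>' \<circ> ?\<omega>')" if "us = [] \<or> length vs < 2"
    using that assms(1) by (auto simp: cycle_of_list_eq_id is_cycle_cycle_of_list)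
  moreover have "?\<pi>' \<circ> ?\<omega>' = id" if "us = []" "length vs < 2"
    using that by (simp add: cycle_of_list_eq_id)
  moreover have "\<exists>\<omega>' \<pi>'. is_cycle \<omega>' \<and> is_cycle \<pi>' \<and> supp \<omega>' \<inter> supp \<pi>' = {} \<and>
      ?\<pi>' \<circ> ?\<omega>' = \<pi>' \<circ> \<omega>' \<and> cyc_len \<omega>' + cyc_len \<pi>' + 1 = cyc_len \<omega>"
    if "cyc_len (?\<pi>' \<circ> ?\<omega>') + 1 = cyc_len \<omega>"
    using that assms(1) disj len_sum
    by (intro exI[of _ ?\<omega>'] exI[of _ ?\<pi>']) (auto simp: is_cycle_cycle_of_list)
  ultimately show ?thesis
    unfolding contraction_pattern_def \<chi> using len by auto
qed

lemma contraction_pattern_merge: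
  assumes "distinct (a # zs @ b # xs)"
  defines "\<omega> \<equiv> cycle_of_list (a # xs)" and "\<pi> \<equiv> cycle_of_list (b # zs)"
  shows "contraction_pattern (cyc_len (\<pi> \<circ> \<omega>))
           (cyc_len (remove_point a (\<pi> \<circ> \<omega> \<circ> transpose a b)))
           \<omega> \<pi> (remove_point a (\<pi> \<circ> \<omega> \<circ> transpose a b))"
proof -
  have dA: "distinct (a # xs)" and dB: "distinct (b # zs)" using assms(1) by auto
  have "remove_point a (\<pi> \<circ> \<omega> \<circ> transpose a b) = cycle_of_list (zs @ b # xs)"
    using assms(1)
    by (simp add: \<omega>_def \<pi>_def cycle_of_list_comp_transpose_merge remove_point_cycle_of_list)
  moreover have "cyc_len (cycle_of_list (zs @ b # xs)) =
      (if xs = [] \<and> zs = [] then 0 else Suc (length xs + length zs))"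
    using assms(1) by (cases xs; cases zs)
      (simp_all add: cyc_len_cycle_of_list del: cycle_of_list.simps)
  moreover have "is_cycle (cycle_of_list (zs @ b # xs))"
    using assms(1) by (intro is_cycle_cycle_of_list) auto
  moreover have disj: "supp \<pi> \<inter> supp \<omega> = {}"
    using assms(1) by (auto simp: \<omega>_def \<pi>_def supp_cycle_of_list)
  moreover have "cyc_len (\<pi> \<circ> \<omega>) = cyc_len \<pi> + cyc_len \<omega>"
  proof (rule cyc_len_comp_disjoint[OF inj_cycle_of_list[of "a # xs", folded \<omega>_def]])
    show "supp \<pi> \<inter> supp \<omega> = {}" by (fact disj)
    show "finite (supp (\<pi> \<circ> \<omega>))"
      using supp_comp_subset[of \<pi> \<omega>] supp_cycle_of_list_subset[of "a # xs"]
        supp_cycle_of_list_subset[of "b # zs"] by (auto intro: finite_subset simp: \<omega>_def \<pi>_def)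
  qed
  moreover have "cyc_len \<omega> = (if xs = [] then 0 else Suc (length xs))"
    unfolding \<omega>_def cyc_len_cycle_of_list[OF dA] by (cases xs) auto
  moreover have "cyc_len \<pi> = (if zs = [] then 0 else Suc (length zs))"
    unfolding \<pi>_def cyc_len_cycle_of_list[OF dB] by (cases zs) auto
  moreover have "\<omega> = id \<longleftrightarrow> xs = []" "\<pi> = id \<longleftrightarrow> zs = []"
    using dA dB
    by (auto simp: \<omega>_def \<pi>_def supp_eq_empty_iff [symmetric] supp_cycle_of_list Suc_le_eq)
  moreover have "\<omega> = \<pi> \<Longrightarrow> \<omega> = id"
    using disj by (simp add: supp_eq_empty_iff [symmetric])
  ultimately show ?thesis
    unfolding contraction_pattern_def by auto
qed

lemma contraction_pattern_cycle_of:
  fixes g :: "nat \<Rightarrow> nat" and a b :: nat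
  assumes g: "permutation g"
  defines "\<omega> \<equiv> cycle_of g a" and "\<pi> \<equiv> cycle_of g b"
  defines "F \<equiv> if \<omega> \<noteq> \<pi> then \<pi> \<circ> \<omega> else \<omega>"
  shows "contraction_pattern (cyc_len F) (cyc_len (remove_point a (F \<circ> transpose a b)))
           \<omega> \<pi> (remove_point a (F \<circ> transpose a b))"
proof -
  obtain xs where A: "support g a = a # xs" using support_Cons[OF g] .
  have dA: "distinct (a # xs)" using cycle_of_permutation[OF g, of a] A by simp
  have \<omega>: "\<omega> = cycle_of_list (a # xs)" using A by (simp add: \<omega>_def cycle_of_eq_cycle_of_list[OF g])
  consider "b = a" | "b \<noteq> a" "b \<in> set xs" | "b \<notin> set (a # xs)" by auto
  then show ?thesis
  proof cases
    case 1
    then have "\<pi> = \<omega>" by (simp add: \<omega>_def \<pi>_def)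
    then show ?thesis
      using contraction_pattern_remove_point[OF dA] 1 by (simp add: F_def \<omega>)
  next
    case 2
    then have "b \<in> set (support g a)" using A by simp
    then have "\<pi> = \<omega>" unfolding \<omega>_def \<pi>_def by (rule cycle_of_eq_if_in_support[OF g])
    moreover obtain us vs where "xs = us @ b # vs" using split_list[OF 2(2)] by blast
    ultimately show ?thesis
      using contraction_pattern_split[of a us b vs] dA by (simp add: F_def \<omega>)
  next
    case 3
    obtain zs where B: "support g b = b # zs" using support_Cons[OF g] .
    have "set (support g b) \<inter> set (support g a) = {}"
      using 3 A disjoint_support'[OF g, of b a] by simp
    then have d: "distinct (a # zs @ b # xs)"
      using dA cycle_of_permutation[OF g, of b] A B by auto
    have \<pi>: "\<pi> = cycle_of_list (b # zs)"
      using B by (simp add: \<pi>_def cycle_of_eq_cycle_of_list[OF g])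
    have "supp \<omega> \<subseteq> set (a # xs)" "supp \<pi> \<subseteq> set (b # zs)"
      unfolding \<omega> \<pi> by (rule supp_cycle_of_list_subset)+
    then have "\<omega> = id" if "\<omega> = \<pi>"
      using that d by (auto simp: supp_eq_empty_iff [symmetric])
    then have "F = \<pi> \<circ> \<omega>" by (auto simp: F_def)
    then show ?thesis using contraction_pattern_merge[OF d] by (simp add: \<omega> \<pi>)
  qed
qed

lemma fixed_on_orbit_of_disjoint_factor:
  assumes "inj \<rho>" "g = F \<circ> \<rho>" "supp F \<inter> supp \<rho> = {}" "supp (cycle_of g a) \<inter> supp \<rho> = {}"
  shows "\<rho> ((g ^^ k) a) = (g ^^ k) a"
proof (rule ccontr)
  let ?x = "(g ^^ k) a"
  assume moved: "\<rho> ?x \<noteq> ?x"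
  then have "\<rho> (\<rho> ?x) \<noteq> \<rho> ?x" using injD[OF assms(1)] by metis
  then have "F (\<rho> ?x) = \<rho> ?x" using assms(3) by (auto simp: supp_def)
  then have "cycle_of g a ?x \<noteq> ?x" using moved assms(2) by (auto simp: cycle_of_def)
  then show False using moved assms(4) by (auto simp: supp_def)
qed

lemma remove_point_transpose_disjoint_factor:
  assumes "inj \<rho>" "g = F \<circ> \<rho>" "supp F \<inter> supp \<rho> = {}" "\<rho> a = a" "\<rho> b = b" "\<rho> (g b) = g b"
  shows "remove_point a (g \<circ> transpose a b) = remove_point a (F \<circ> transpose a b) \<circ> \<rho>"
    and "supp (remove_point a (F \<circ> transpose a b)) \<inter> supp \<rho> = {}"
proof -
  have "\<rho> x \<noteq> a" "\<rho> x \<noteq> b" if "x \<noteq> a" "x \<noteq> b" for x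
    using that assms(1,4,5) by (metis injD)+
  then have "transpose a b \<circ> \<rho> = \<rho> \<circ> transpose a b"
    using assms(4,5) by (auto simp: fun_eq_iff transpose_def)
  then have "g \<circ> transpose a b = F \<circ> transpose a b \<circ> \<rho>"
    using assms(2) by (simp add: o_assoc [symmetric])
  then show "remove_point a (g \<circ> transpose a b) = remove_point a (F \<circ> transpose a b) \<circ> \<rho>"
    using assms(4) by (simp add: remove_point_comp_fixed)
  have "supp (remove_point a (F \<circ> transpose a b)) \<subseteq> supp F \<union> {a, b, g b}"
    using supp_remove_point_subset[of a "F \<circ> transpose a b"] supp_comp_subset[of F "transpose a b"]
      supp_transpose_subset[of a b] assms(2,5) by auto
  moreover have "\<rho> y = y" if "y \<in> supp F \<union> {a, b, g b}" for y
    using that assms(3-6) by (auto simp: supp_def)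
  ultimately show "supp (remove_point a (F \<circ> transpose a b)) \<inter> supp \<rho> = {}"
    by (auto simp: supp_def)
qed

lemma remove_point_comp_transpose_decomposition:
  fixes g \<rho> :: "nat \<Rightarrow> nat" and a b :: nat
  assumes g: "permutation g" and \<rho>: "inj \<rho>"
  defines "\<omega> \<equiv> cycle_of g a" and "\<pi> \<equiv> cycle_of g b"
  assumes disj: "supp \<rho> \<inter> supp \<omega> = {}" "supp \<rho> \<inter> supp \<pi> = {}"
    and factorization: "if \<omega> \<noteq> \<pi> then g = \<pi> \<circ> \<omega> \<circ> \<rho> else g = \<omega> \<circ> \<rho>"
  obtains \<chi> where "remove_point a (g \<circ> transpose a b) = \<chi> \<circ> \<rho>" "\<chi> a = a"
    and "supp \<chi> \<inter> supp \<rho> = {}" "contraction_pattern (cyc_len g) (cyc_len (\<chi> \<circ> \<rho>)) \<omega> \<pi> \<chi>"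
proof -
  define F where "F = (if \<omega> \<noteq> \<pi> then \<pi> \<circ> \<omega> else \<omega>)"
  define \<chi> where "\<chi> = remove_point a (F \<circ> transpose a b)"
  have gF: "g = F \<circ> \<rho>" using factorization by (cases "\<omega> = \<pi>") (simp_all add: F_def)
  have disjF: "supp F \<inter> supp \<rho> = {}"
    using supp_comp_subset[of \<pi> \<omega>] disj by (auto simp: F_def)
  have "\<rho> ((g ^^ k) x) = (g ^^ k) x" if "x \<in> {a, b}" for k x
    using fixed_on_orbit_of_disjoint_factor[OF \<rho> gF disjF] disj that
    by (auto simp: \<omega>_def \<pi>_def Int_commute)
  from this[of _ 0] this[of _ 1] have "\<rho> a = a" "\<rho> b = b" "\<rho> (g b) = g b" by auto
  note factor = remove_point_transpose_disjoint_factor[OF \<rho> gF disjF this, folded \<chi>_def]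
  have fin: "finite (supp g)" using g by (meson finite_supp_permutes permutation_permutes)
  have "supp (remove_point a (g \<circ> transpose a b)) \<subseteq> supp g \<union> {a, b, g b}"
    using supp_remove_point_subset[of a "g \<circ> transpose a b"] supp_comp_subset[of g "transpose a b"]
      supp_transpose_subset[of a b] by auto
  then have "finite (supp (\<chi> \<circ> \<rho>))" using fin factor(1) by (auto intro: finite_subset)
  then have "cyc_len (\<chi> \<circ> \<rho>) = cyc_len \<chi> + cyc_len \<rho>"
    using cyc_len_comp_disjoint[OF \<rho> factor(2)] by simp
  moreover have "cyc_len g = cyc_len F + cyc_len \<rho>"
    using cyc_len_comp_disjoint[OF \<rho> disjF] fin gF by simp
  moreover have "contraction_pattern (cyc_len F) (cyc_len \<chi>) \<omega> \<pi> \<chi>"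
    unfolding F_def \<chi>_def \<omega>_def \<pi>_def by (rule contraction_pattern_cycle_of[OF g])
  ultimately show thesis
    using that factor contraction_pattern_add by (simp add: \<chi>_def)
qed

theorem proposition4p4:
  fixes n :: nat and \<sigma> \<tau> \<rho> :: "nat \<Rightarrow> nat"
  assumes "2 \<le> n"
    and "\<sigma> permutes {..<n}" and "\<tau> permutes {..<n}"
    and "ct n \<sigma> \<noteq> ct n \<tau>"
    and "\<rho> permutes {..<n}"
    and "supp \<rho> \<inter> supp (cycle_of (\<tau> \<circ> inv \<sigma>) (n - 1)) = {}"
    and "supp \<rho> \<inter> supp (cycle_of (\<tau> \<circ> inv \<sigma>) (\<sigma> (n - 1))) = {}"
    and "if cycle_of (\<tau> \<circ> inv \<sigma>) (n - 1) \<noteq> cycle_of (\<tau> \<circ> inv \<sigma>) (\<sigma> (n - 1))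
         then \<tau> \<circ> inv \<sigma> = cycle_of (\<tau> \<circ> inv \<sigma>) (\<sigma> (n - 1)) \<circ> cycle_of (\<tau> \<circ> inv \<sigma>) (n - 1) \<circ> \<rho>
         else \<tau> \<circ> inv \<sigma> = cycle_of (\<tau> \<circ> inv \<sigma>) (n - 1) \<circ> \<rho>"
  shows "let \<omega> = cycle_of (\<tau> \<circ> inv \<sigma>) (n - 1); \<pi> = cycle_of (\<tau> \<circ> inv \<sigma>) (\<sigma> (n - 1)) in
    \<exists>\<chi>. \<chi> permutes {..<n - 1} \<and> supp \<chi> \<inter> supp \<rho> = {} \<and>
      ct n \<tau> \<circ> inv (ct n \<sigma>) = \<chi> \<circ> \<rho> \<and>
      (hd (n - 1) (ct n \<sigma>) (ct n \<tau>) = hd n \<sigma> \<tau> \<longrightarrow>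
         (\<omega> = id \<or> \<pi> = id) \<and> is_cycle \<chi> \<and> cyc_len \<chi> = cyc_len (\<pi> \<circ> \<omega>)) \<and>
      (hd (n - 1) (ct n \<sigma>) (ct n \<tau>) + 1 = hd n \<sigma> \<tau> \<longrightarrow>
         (\<omega> = \<pi> \<longrightarrow>
            (is_cycle \<chi> \<and> cyc_len \<chi> + 1 = cyc_len \<omega>) \<or>
            (\<exists>\<omega>' \<pi>'. is_cycle \<omega>' \<and> is_cycle \<pi>' \<and> supp \<omega>' \<inter> supp \<pi>' = {} \<and>
               \<chi> = \<pi>' \<circ> \<omega>' \<and> cyc_len \<omega>' + cyc_len \<pi>' + 1 = cyc_len \<omega>)) \<and>
         (\<omega> \<noteq> \<pi> \<longrightarrow> is_cycle \<chi> \<and> cyc_len \<chi> + 1 = cyc_len \<omega> + cyc_len \<pi>)) \<and>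
      (hd (n - 1) (ct n \<sigma>) (ct n \<tau>) + 2 = hd n \<sigma> \<tau> \<longrightarrow>
         \<omega> = \<pi> \<and> is_cycle \<chi> \<and> cyc_len \<chi> + 2 = cyc_len \<omega>) \<and>
      (hd (n - 1) (ct n \<sigma>) (ct n \<tau>) + 3 = hd n \<sigma> \<tau> \<longrightarrow>
         \<omega> = \<pi> \<and> cyc_len \<omega> = 3 \<and> \<chi> = id)"
proof -
  define a b g where "a = n - 1" and "b = \<sigma> a" and "g = \<tau> \<circ> inv \<sigma>"
  have g: "g permutes {..<n}" using assms(2,3) by (simp add: g_def permutes_compose permutes_inv)
  have ct: "ct n \<sigma> permutes {..<a}" "ct n \<tau> permutes {..<a}"
    using ct_permutes assms(1-3) by (auto simp: a_def)
  have "ct n \<tau> \<circ> inv (ct n \<sigma>) = remove_point a (g \<circ> transpose a b)"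
    unfolding ct_eq_remove_point[OF assms(2)] ct_eq_remove_point[OF assms(3)] g_def a_def b_def
    by (rule remove_point_comp_inv[OF permutes_bij[OF assms(2)]])
  moreover obtain \<chi> where "remove_point a (g \<circ> transpose a b) = \<chi> \<circ> \<rho>" "\<chi> a = a"
    "supp \<chi> \<inter> supp \<rho> = {}"
    "contraction_pattern (cyc_len g) (cyc_len (\<chi> \<circ> \<rho>)) (cycle_of g a) (cycle_of g b) \<chi>"
    using remove_point_comp_transpose_decomposition
        [OF permutes_imp_permutation[OF finite_lessThan g] permutes_inj[OF assms(5)]] assms(6-8)
    unfolding g_def a_def b_def by blast
  ultimately have g': "ct n \<tau> \<circ> inv (ct n \<sigma>) = \<chi> \<circ> \<rho>" by simp
  have "\<chi> \<circ> \<rho> permutes {..<n}"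
    unfolding g' [symmetric] using permutes_compose[OF permutes_inv[OF ct(1)] ct(2)]
    by (rule permutes_subset) (auto simp: a_def)
  then have "\<chi> permutes {..<n}" using assms(5) by (rule permutes_comp_cancel_right)
  moreover have "{..<n} - {..<a} = {a}" using assms(1) by (auto simp: a_def)
  ultimately have "\<chi> permutes {..<a}"
    using \<open>\<chi> a = a\<close> by (metis permutes_superset singletonD)
  moreover have hd: "hd n \<sigma> \<tau> = cyc_len g" "hd a (ct n \<sigma>) (ct n \<tau>) = cyc_len (\<chi> \<circ> \<rho>)"
    using hd_eq_cyc_len[OF assms(2,3)] hd_eq_cyc_len[OF ct] by (simp_all add: g_def g')
  ultimately show ?thesis
    using \<open>supp \<chi> \<inter> supp \<rho> = {}\<close> g' \<open>contraction_pattern _ _ _ _ \<chi>\<close>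
    unfolding Let_def a_def [symmetric] b_def [symmetric] g_def [symmetric] hd
      contraction_pattern_def [symmetric] by blast
qed

end
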